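(* Let $n\ge2$. Every point of the polygon $S(n)$ is an eigenvalue of some standardized Laplacian matrix of order $n$.
   Context: A standardized Laplacian matrix of order $n$ is a real $n\times n$ matrix whose row sums are all $0$ and whose off-diagonal entries are nonpositive with absolute value at most $1/n$. For $k=0,1,\dots,n-1$ put $\lambda_k(n)=\frac1n\big(k-\sum_{j=1}^k e^{-2\pi\mathrm i j/n}\big)=\frac1n\Big(k-\frac{\sin(k\pi/n)}{\sin(\pi/n)}e^{-(k+1)\pi\mathrm i/n}\Big)$ (so $\lambda_0(n)=0$, $\lambda_{n-1}(n)=1$). $S(n)$ is the closed convex polygon with vertices $\lambda_0(n)=0,\lambda_1(n),\dots,\lambda_{n-2}(n),\lambda_{n-1}(n)=1,\overline{\lambda_{n-2}(n)},\dots,\overline{\lambda_1(n)}$. *)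

theory Defs
  imports "HOL-Analysis.Analysis" "Jordan_Normal_Form.Char_Poly"
begin

definition std_laplacian :: "nat \<Rightarrow> real mat \<Rightarrow> bool" where
  "std_laplacian n A \<longleftrightarrow> A \<in> carrier_mat n n
     \<and> (\<forall>i<n. (\<Sum>j<n. A $$ (i, j)) = 0)
     \<and> (\<forall>i<n. \<forall>j<n. i \<noteq> j \<longrightarrow> A $$ (i, j) \<le> 0 \<and> \<bar>A $$ (i, j)\<bar> \<le> 1 / real n)"

definition lam :: "nat \<Rightarrow> nat \<Rightarrow> complex" where
  "lam n k = (of_nat k - (\<Sum>j=1..k. cis (- 2 * pi * real j / real n))) / of_nat n"

definition S :: "nat \<Rightarrow> complex set" where
  "S n = convex hull ((lam n ` {..<n}) \<union> (cnj ` lam n ` {..<n}))"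

end

theory Submission
  imports Defs
begin

(* Put zeta = e^{-2 pi i/n}.  Every vertex lam n k of S(n) and its conjugate
   has the form  (1/n) \<Sum>_{j<n} a_j (1 - zeta^j)  with 0 \<le> a_j \<le> 1 (a is the indicator
   of {1..k}, resp. of {n-k..n-1}); points of this form make up a convex set (a zonotope),
   so S(n), the convex hull of the vertices, lies inside it.
   Conversely, for such coefficients a the circulant matrix with first row
   (s - a_0/n, -a_1/n, ..., -a_{n-1}/n), where s = (\<Sum> a_j)/n, is a standardized Laplacian,
   and like every circulant matrix it has the eigenvector (1, zeta, ..., zeta^{n-1}); its
   eigenvalue is exactly (1/n) \<Sum> a_j (1 - zeta^j). *)

definition circulant :: "nat \<Rightarrow> (nat \<Rightarrow> 'a::zero) \<Rightarrow> 'a mat" where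
  "circulant n c = mat n n (\<lambda>(i, j). c ((j + n - i) mod n))"

lemma circulant_carrier: "circulant n c \<in> carrier_mat n n"
  unfolding circulant_def by simp

lemma circulant_index: "i < n \<Longrightarrow> j < n \<Longrightarrow> circulant n c $$ (i, j) = c ((j + n - i) mod n)"
  unfolding circulant_def by simp

lemma map_mat_circulant: "map_mat f (circulant n c) = circulant n (f \<circ> c)"
  by (rule eq_matI) (auto simp: circulant_def)

lemma cyclic_offset_eq_0_iff:
  fixes i j n :: nat
  assumes "i < n" "j < n"
  shows "(j + n - i) mod n = 0 \<longleftrightarrow> i = j"
proof (cases "i \<le> j")
  case True
  then have "j + n - i = (j - i) + n" by simp
  then have "(j + n - i) mod n = (j - i) mod n" by (simp only: mod_add_self2)
  also have "\<dots> = j - i" using assms by simp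
  finally show ?thesis using True by auto
next
  case False
  then show ?thesis using assms by simp
qed

lemma sum_cyclic_shift:
  fixes g :: "nat \<Rightarrow> 'b::comm_monoid_add"
  assumes "i < n"
  shows "(\<Sum>j<n. g ((j + n - i) mod n)) = (\<Sum>l<n. g l)"
proof (rule sum.reindex_bij_witness[where j = "\<lambda>l. (l + n - i) mod n" and i = "\<lambda>l. (l + i) mod n"])
  fix a assume a: "a \<in> {..<n}"
  show "(a + n - i) mod n \<in> {..<n}" "(a + i) mod n \<in> {..<n}" using assms by auto
  show "g ((a + n - i) mod n) = g ((a + n - i) mod n)" ..
  have "((a + n - i) mod n + i) mod n = (a + n) mod n"
    using assms by (simp add: mod_add_left_eq)
  then show "((a + n - i) mod n + i) mod n = a" using a by simp
  have "((a + i) mod n + n - i) mod n = ((a + i) mod n + (n - i)) mod n" using assms by simp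
  also have "\<dots> = (a + i + (n - i)) mod n" by (simp add: mod_add_left_eq)
  also have "\<dots> = (a + n) mod n" using assms by simp
  finally show "((a + i) mod n + n - i) mod n = a" using a by simp
qed

lemma power_mod_root_of_unity:
  fixes w :: "'a::monoid_mult"
  assumes "w ^ n = 1"
  shows "w ^ (m mod n) = w ^ m"
proof -
  have "w ^ m = w ^ (n * (m div n) + m mod n)" by simp
  also have "\<dots> = (w ^ n) ^ (m div n) * w ^ (m mod n)"
    by (simp only: power_add power_mult)
  finally show ?thesis using assms by simp
qed

lemma circulant_mult_powers:
  fixes w :: "'a::comm_ring_1"
  assumes "w ^ n = 1"
  shows "circulant n c *\<^sub>v vec n (\<lambda>j. w ^ j) = (\<Sum>l<n. c l * w ^ l) \<cdot>\<^sub>v vec n (\<lambda>j. w ^ j)"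
proof (rule eq_vecI)
  fix i assume "i < dim_vec ((\<Sum>l<n. c l * w ^ l) \<cdot>\<^sub>v vec n (\<lambda>j. w ^ j))"
  then have i: "i < n" by simp
  have shift: "w ^ ((j + n - i) mod n) * w ^ i = w ^ j" for j
  proof -
    have "w ^ ((j + n - i) mod n) * w ^ i = w ^ (j + n)"
      using i by (simp add: power_mod_root_of_unity[OF assms] power_add[symmetric])
    then show ?thesis using assms by (simp add: power_add)
  qed
  have "(circulant n c *\<^sub>v vec n (\<lambda>j. w ^ j)) $ i = (\<Sum>j<n. c ((j + n - i) mod n) * w ^ j)"
    using i by (simp add: circulant_def scalar_prod_def atLeast0LessThan)
  also have "\<dots> = (\<Sum>j<n. c ((j + n - i) mod n) * w ^ ((j + n - i) mod n)) * w ^ i"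
    by (simp add: sum_distrib_right mult.assoc shift)
  also have "\<dots> = (\<Sum>l<n. c l * w ^ l) * w ^ i"
    using sum_cyclic_shift[OF i, of "\<lambda>l. c l * w ^ l"] by simp
  finally show "(circulant n c *\<^sub>v vec n (\<lambda>j. w ^ j)) $ i
      = ((\<Sum>l<n. c l * w ^ l) \<cdot>\<^sub>v vec n (\<lambda>j. w ^ j)) $ i"
    using i by simp
qed (simp add: circulant_def)

lemma eigenvalue_circulant:
  fixes w :: "'a::field"
  assumes "n > 0" "w ^ n = 1"
  shows "eigenvalue (circulant n c) (\<Sum>l<n. c l * w ^ l)"
  unfolding eigenvalue_def eigenvector_def
proof (intro exI conjI)
  show "vec n (\<lambda>j. w ^ j) \<in> carrier_vec (dim_row (circulant n c))"
    by (simp add: circulant_def)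
  have "vec n (\<lambda>j. w ^ j) $ 0 \<noteq> 0\<^sub>v n $ 0" using assms(1) by simp
  then show "vec n (\<lambda>j. w ^ j) \<noteq> 0\<^sub>v (dim_row (circulant n c))"
    by (auto simp: circulant_def)
qed (rule circulant_mult_powers[OF assms(2)])

definition zeta :: "nat \<Rightarrow> complex" where
  "zeta n = cis (- 2 * pi / real n)"

lemma zeta_pow: "zeta n ^ j = cis (real j * (- 2 * pi / real n))"
  unfolding zeta_def by (rule Complex.DeMoivre)

lemma zeta_pow_n: "n > 0 \<Longrightarrow> zeta n ^ n = 1"
  unfolding zeta_pow by (simp add: cis_cnj[symmetric])

lemma cis_eq_zeta_pow: "cis (- 2 * pi * real j / real n) = zeta n ^ j"
  unfolding zeta_pow by (simp add: field_simps)

text \<open>Conjugation reverses the powers of zeta; this turns conjugate vertices into index sets.\<close>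
lemma cnj_zeta_pow:
  assumes "n > 0" "j \<le> n"
  shows "cnj (zeta n ^ j) = zeta n ^ (n - j)"
proof -
  have unit: "zeta n ^ j * cnj (zeta n ^ j) = 1"
    unfolding zeta_pow cis_cnj cis_mult by simp
  have "zeta n ^ (n - j) = zeta n ^ (n - j + j) * cnj (zeta n ^ j)"
    using unit by (simp add: power_add mult.assoc)
  also have "\<dots> = cnj (zeta n ^ j)" using assms zeta_pow_n[of n] by simp
  finally show ?thesis by simp
qed

lemma lam_eq_sum_zeta: "lam n k = (\<Sum>j\<in>{1..k}. 1 - zeta n ^ j) / of_nat n"
  unfolding lam_def cis_eq_zeta_pow by (simp add: sum_subtractf)

definition zono_point :: "nat \<Rightarrow> (nat \<Rightarrow> real) \<Rightarrow> complex" where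
  "zono_point n a = (\<Sum>j<n. of_real (a j) * (1 - zeta n ^ j)) / of_nat n"

definition unit_coeffs :: "(nat \<Rightarrow> real) set" where
  "unit_coeffs = {a. \<forall>j. 0 \<le> a j \<and> a j \<le> 1}"

definition zonotope :: "nat \<Rightarrow> complex set" where
  "zonotope n = zono_point n ` unit_coeffs"

text \<open>zono_point is affine in the coefficients, and the cube of coefficients is convex.\<close>
lemma convex_zonotope: "convex (zonotope n)"
  unfolding convex_def
proof (intro ballI allI impI)
  fix x y and u v :: real
  assume "x \<in> zonotope n" "y \<in> zonotope n" and uv: "0 \<le> u" "0 \<le> v" "u + v = 1"
  then obtain a b where ab: "a \<in> unit_coeffs" "b \<in> unit_coeffs"
    and xy: "x = zono_point n a" "y = zono_point n b"
    unfolding zonotope_def by auto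
  define c where "c = (\<lambda>j. u * a j + v * b j)"
  have "c j \<le> 1" for j
    using mult_left_le[of "a j" u] mult_left_le[of "b j" v] ab uv
    unfolding c_def unit_coeffs_def by simp
  then have "c \<in> unit_coeffs"
    using ab uv unfolding c_def unit_coeffs_def by simp
  moreover have "u *\<^sub>R x + v *\<^sub>R y = zono_point n c"
    unfolding xy zono_point_def c_def scaleR_conv_of_real
    by (simp add: sum_distrib_left sum.distrib[symmetric] add_divide_distrib[symmetric] algebra_simps)
  ultimately show "u *\<^sub>R x + v *\<^sub>R y \<in> zonotope n"
    unfolding zonotope_def by blast
qed

lemma subset_sum_in_zonotope:
  assumes "J \<subseteq> {..<n}"
  shows "(\<Sum>j\<in>J. 1 - zeta n ^ j) / of_nat n \<in> zonotope n"
proof -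
  define a where "a = (\<lambda>j. if j \<in> J then 1 else (0::real))"
  have "(\<Sum>j<n. of_real (a j) * (1 - zeta n ^ j)) = (\<Sum>j\<in>{..<n} \<inter> J. 1 - zeta n ^ j)"
    unfolding a_def by (subst sum.inter_restrict) (auto intro: sum.cong)
  then have "zono_point n a = (\<Sum>j\<in>J. 1 - zeta n ^ j) / of_nat n"
    using assms unfolding zono_point_def by (simp add: Int_absorb1)
  moreover have "a \<in> unit_coeffs" unfolding a_def unit_coeffs_def by simp
  ultimately show ?thesis unfolding zonotope_def by (metis image_eqI)
qed

lemma lam_in_zonotope: "k < n \<Longrightarrow> lam n k \<in> zonotope n"
  unfolding lam_eq_sum_zeta by (rule subset_sum_in_zonotope) auto

text \<open>The conjugate vertex comes from the indices {n-k..n-1}, since cnj zeta^j = zeta^(n-j).\<close>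
lemma cnj_lam_in_zonotope:
  assumes "k < n"
  shows "cnj (lam n k) \<in> zonotope n"
proof -
  have "(\<Sum>j\<in>{n-k..<n}. 1 - zeta n ^ j) = (\<Sum>j\<in>{1..k}. 1 - zeta n ^ (n - j))"
    by (rule sum.reindex_bij_witness[where i = "\<lambda>j. n - j" and j = "\<lambda>j. n - j"])
       (use assms in auto)
  also have "\<dots> = (\<Sum>j\<in>{1..k}. cnj (1 - zeta n ^ j))"
    by (rule sum.cong) (use assms cnj_zeta_pow[of n] in auto)
  finally have "cnj (lam n k) = (\<Sum>j\<in>{n-k..<n}. 1 - zeta n ^ j) / of_nat n"
    unfolding lam_eq_sum_zeta by simp
  moreover have "(\<Sum>j\<in>{n-k..<n}. 1 - zeta n ^ j) / of_nat n \<in> zonotope n"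
    by (rule subset_sum_in_zonotope) auto
  ultimately show ?thesis by simp
qed

lemma S_subset_zonotope: "S n \<subseteq> zonotope n"
  unfolding S_def
  by (rule hull_minimal) (use lam_in_zonotope cnj_lam_in_zonotope convex_zonotope in auto)

text \<open>First row of the circulant Laplacian with off-diagonal weights a_l / n: the diagonal
  entry is chosen so that the row sums vanish.\<close>
definition lap_row :: "nat \<Rightarrow> (nat \<Rightarrow> real) \<Rightarrow> nat \<Rightarrow> real" where
  "lap_row n a l = (if l = 0 then (\<Sum>m<n. a m) / real n else 0) - a l / real n"

lemma std_laplacian_circulant:
  assumes "a \<in> unit_coeffs"
  shows "std_laplacian n (circulant n (lap_row n a))"
  unfolding std_laplacian_def
proof (intro conjI allI impI circulant_carrier)
  fix i assume i: "i < n"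
  have "(\<Sum>j<n. circulant n (lap_row n a) $$ (i, j)) = (\<Sum>l<n. lap_row n a l)"
    using sum_cyclic_shift[OF i] i by (simp add: circulant_index)
  also have "\<dots> = 0"
    using i by (simp add: lap_row_def sum_subtractf sum_divide_distrib)
  finally show "(\<Sum>j<n. circulant n (lap_row n a) $$ (i, j)) = 0" .
next
  fix i j assume ij: "i < n" "j < n" "i \<noteq> j"
  then have "circulant n (lap_row n a) $$ (i, j) = - (a ((j + n - i) mod n) / real n)"
    by (simp add: circulant_index lap_row_def cyclic_offset_eq_0_iff)
  moreover have "0 \<le> a ((j + n - i) mod n)" "a ((j + n - i) mod n) \<le> 1"
    using assms unfolding unit_coeffs_def by auto
  ultimately show "circulant n (lap_row n a) $$ (i, j) \<le> 0"
    and "\<bar>circulant n (lap_row n a) $$ (i, j)\<bar> \<le> 1 / real n"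
    by (auto simp: divide_right_mono)
qed

lemma lap_row_at_zeta:
  assumes "n > 0"
  shows "(\<Sum>l<n. complex_of_real (lap_row n a l) * zeta n ^ l) = zono_point n a"
proof -
  have diagonal: "(\<Sum>l<n. complex_of_real (if l = 0 then (\<Sum>m<n. a m) / real n else 0) * zeta n ^ l)
      = (\<Sum>m<n. of_real (a m)) / of_nat n"
  proof -
    have "(\<Sum>l<n. complex_of_real (if l = 0 then (\<Sum>m<n. a m) / real n else 0) * zeta n ^ l)
        = (\<Sum>l<n. if l = 0 then (\<Sum>m<n. of_real (a m)) / of_nat n else 0)"
      by (rule sum.cong) auto
    also have "\<dots> = (\<Sum>m<n. of_real (a m)) / of_nat n" using assms by simp
    finally show ?thesis .
  qed
  have "(\<Sum>l<n. complex_of_real (lap_row n a l) * zeta n ^ l)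
      = (\<Sum>m<n. of_real (a m)) / of_nat n - (\<Sum>l<n. of_real (a l) * zeta n ^ l) / of_nat n"
    unfolding lap_row_def diagonal[symmetric]
    by (simp add: left_diff_distrib sum_subtractf sum_divide_distrib)
  also have "\<dots> = zono_point n a"
    unfolding zono_point_def by (simp add: right_diff_distrib sum_subtractf diff_divide_distrib)
  finally show ?thesis .
qed

lemma eigenvalue_lap_circulant:
  assumes "n > 0"
  shows "eigenvalue (map_mat complex_of_real (circulant n (lap_row n a))) (zono_point n a)"
  using eigenvalue_circulant[OF assms zeta_pow_n[OF assms], of "complex_of_real \<circ> lap_row n a"]
  by (simp add: map_mat_circulant lap_row_at_zeta[OF assms])

theorem theorem9:
  fixes n :: nat and z :: complex
  assumes "n \<ge> 2" and "z \<in> S n"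
  shows "\<exists>A. std_laplacian n A \<and> eigenvalue (map_mat complex_of_real A) z"
proof -
  obtain a where a: "a \<in> unit_coeffs" and z: "z = zono_point n a"
    using assms(2) S_subset_zonotope unfolding zonotope_def by blast
  have "n > 0" using assms(1) by simp
  then show ?thesis
    using std_laplacian_circulant[OF a] eigenvalue_lap_circulant unfolding z by blast
qed

end
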